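(* Let $g:\mathbb{R}^d\times\mathbb{R}^d\to\mathbb{R}^d$ and $R>0$ satisfy: (i) there exists $L_{g,R}\ge0$ such that $\|g(x,z_1)-g(x,z_2)\|\le L_{g,R}\|z_1-z_2\|$ for all $z_1,z_2,x\in\mathbb{R}^d$ with $\|x\|\le R$; (ii) there exist $C_{R,0},C_{R,1}\ge0$ such that $\|g(x,z)\|\le C_{R,0}+C_{R,1}\|z\|$ for all $x,z$ with $\|x\|\le R$. Let $b\in\mathbb{R}$ with $|b|>C_{R,1}$ and $f^g(x,z)=bz+g(x,z)$, $f^g_x=f^g(x,\cdot)$. Then for every $M>0$, with $\tilde M=(M+C_{R,0})/(|b|-C_{R,1})$: there exists $L\ge0$ such that $f^g_x$ is $L$-Lipschitz for every $x\in B(0,R)$, and $B(0,M)\subset f^g_x(B(0,\tilde M))$ for every $x\in B(0,R)$.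
   Context: $B(x,r)$ denotes the Euclidean ball centered at $x$ of radius $r$. *)

theory Defs
  imports "HOL-Analysis.Analysis"
begin

definition fg :: "real \<Rightarrow> ('a::euclidean_space \<Rightarrow> 'a \<Rightarrow> 'a) \<Rightarrow> 'a \<Rightarrow> 'a \<Rightarrow> 'a" where
  "fg b g x z = b *\<^sub>R z + g x z"

end

theory Submission
  imports Defs
begin

text \<open>Lipschitz continuity is immediate from the triangle inequality. For the covering
property fix \<open>y\<close> with \<open>\<parallel>y\<parallel> < M\<close>; solving \<open>b z + h z = y\<close> means finding a fixed point of
\<open>z \<mapsto> (y - h z) / b\<close>. Linear growth of \<open>h\<close> with slope \<open>C\<^sub>1 < \<bar>b\<bar>\<close> makes this map send the closed
ball of radius \<open>(M + C\<^sub>0) / (\<bar>b\<bar> - C\<^sub>1)\<close> into itself, so Brouwer's theorem yields the fixed point,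
and the strict bound on \<open>\<parallel>y\<parallel>\<close> puts it in the open ball.\<close>

lemma scaleR_plus_eq_solvable_in_ball:
  fixes h :: "'a::euclidean_space \<Rightarrow> 'a" and b C0 C1 M :: real
  assumes h_cont: "continuous_on UNIV h"
    and h_growth: "\<And>z. norm (h z) \<le> C0 + C1 * norm z"
    and "C0 \<ge> 0" "C1 \<ge> 0" "\<bar>b\<bar> > C1" "M > 0"
    and "norm y < M"
  obtains z where "norm z < (M + C0) / (\<bar>b\<bar> - C1)" and "b *\<^sub>R z + h z = y"
proof -
  define T where "T = (M + C0) / (\<bar>b\<bar> - C1)"
  have b_gap: "\<bar>b\<bar> - C1 > 0" and "b \<noteq> 0"
    using assms(4,5) by auto
  have T_gap: "T * (\<bar>b\<bar> - C1) = M + C0" and "T \<ge> 0"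
    unfolding T_def using b_gap assms(3,6) by auto
  define \<phi> where "\<phi> z = (1 / b) *\<^sub>R (y - h z)" for z
  have \<phi>_bound: "norm (\<phi> z) * \<bar>b\<bar> \<le> norm y + C0 + C1 * norm z" for z
  proof -
    have "norm (\<phi> z) * \<bar>b\<bar> = norm (y - h z)"
      unfolding \<phi>_def using \<open>b \<noteq> 0\<close> by simp
    also have "\<dots> \<le> norm y + norm (h z)"
      by (rule norm_triangle_ineq4)
    finally show ?thesis
      using h_growth[of z] by simp
  qed
  have \<phi>_cont: "continuous_on (cball 0 T) \<phi>"
    unfolding \<phi>_def by (intro continuous_intros continuous_on_subset[OF h_cont]) auto
  have \<phi>_maps: "\<phi> \<in> cball 0 T \<rightarrow> cball 0 T"
  proof
    fix z :: 'a assume "z \<in> cball 0 T"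
    then have "C1 * norm z \<le> C1 * T"
      using assms(4) by (simp add: mult_left_mono)
    then have "norm (\<phi> z) * \<bar>b\<bar> \<le> T * \<bar>b\<bar>"
      using \<phi>_bound[of z] \<open>norm y < M\<close> T_gap by (simp add: algebra_simps)
    then show "\<phi> z \<in> cball 0 T"
      using \<open>b \<noteq> 0\<close> by simp
  qed
  obtain z where "\<phi> z = z"
    using brouwer[OF compact_cball convex_cball _ \<phi>_cont \<phi>_maps] \<open>T \<ge> 0\<close> by auto
  have "norm z * (\<bar>b\<bar> - C1) < T * (\<bar>b\<bar> - C1)"
    using \<phi>_bound[of z] \<open>\<phi> z = z\<close> \<open>norm y < M\<close> T_gap by (simp add: algebra_simps)
  then have "norm z < T"
    using b_gap by simp
  moreover have "b *\<^sub>R z + h z = y"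
    using arg_cong[OF \<open>\<phi> z = z\<close>, of "scaleR b"] \<open>b \<noteq> 0\<close> by (simp add: \<phi>_def algebra_simps)
  ultimately show ?thesis
    using that unfolding T_def by blast
qed

lemma ball_subset_image_scaleR_plus:
  fixes h :: "'a::euclidean_space \<Rightarrow> 'a" and b C0 C1 M :: real
  assumes "continuous_on UNIV h"
    and "\<And>z. norm (h z) \<le> C0 + C1 * norm z"
    and "C0 \<ge> 0" "C1 \<ge> 0" "\<bar>b\<bar> > C1" "M > 0"
  shows "ball 0 M \<subseteq> (\<lambda>z. b *\<^sub>R z + h z) ` ball 0 ((M + C0) / (\<bar>b\<bar> - C1))"
proof
  fix y :: 'a assume "y \<in> ball 0 M"
  then obtain z where "norm z < (M + C0) / (\<bar>b\<bar> - C1)" "b *\<^sub>R z + h z = y"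
    using scaleR_plus_eq_solvable_in_ball[OF assms] by auto
  then show "y \<in> (\<lambda>z. b *\<^sub>R z + h z) ` ball 0 ((M + C0) / (\<bar>b\<bar> - C1))"
    by force
qed

theorem proposition11:
  fixes g :: "'a::euclidean_space \<Rightarrow> 'a \<Rightarrow> 'a" and R C0 C1 b :: real
  assumes "R > 0"
    and "\<exists>Lg\<ge>0. \<forall>x z1 z2. norm x \<le> R \<longrightarrow> norm (g x z1 - g x z2) \<le> Lg * norm (z1 - z2)"
    and "C0 \<ge> 0" and "C1 \<ge> 0"
    and "\<forall>x z. norm x \<le> R \<longrightarrow> norm (g x z) \<le> C0 + C1 * norm z"
    and "\<bar>b\<bar> > C1"
  shows "\<forall>M>0. (\<exists>L\<ge>0. \<forall>x\<in>ball 0 R. L-lipschitz_on UNIV (fg b g x))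
              \<and> (\<forall>x\<in>ball 0 R. ball 0 M \<subseteq> fg b g x ` ball 0 ((M + C0) / (\<bar>b\<bar> - C1)))"
proof (intro allI impI conjI)
  obtain Lg where "Lg \<ge> 0"
    and Lg: "\<And>x z1 z2. norm x \<le> R \<Longrightarrow> norm (g x z1 - g x z2) \<le> Lg * norm (z1 - z2)"
    using assms(2) by blast
  have g_lipschitz: "Lg-lipschitz_on UNIV (g x)" if "x \<in> ball 0 R" for x
    using that by (intro lipschitz_onI) (auto simp: dist_norm Lg \<open>Lg \<ge> 0\<close>)
  have fg_eq: "fg b g x = (\<lambda>z. b *\<^sub>R z + g x z)" for x
    by (simp add: fg_def fun_eq_iff)
  show "\<exists>L\<ge>0. \<forall>x\<in>ball 0 R. L-lipschitz_on UNIV (fg b g x)"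
    using lipschitz_on_add[OF lipschitz_on_cmult[OF lipschitz_on_id] g_lipschitz] \<open>Lg \<ge> 0\<close>
    unfolding fg_eq by (intro exI[of _ "\<bar>b\<bar> + Lg"]) auto
  fix M :: real assume "M > 0"
  show "\<forall>x\<in>ball 0 R. ball 0 M \<subseteq> fg b g x ` ball 0 ((M + C0) / (\<bar>b\<bar> - C1))"
    unfolding fg_eq
    using ball_subset_image_scaleR_plus[OF lipschitz_on_continuous_on[OF g_lipschitz]]
      assms(3-6) \<open>M > 0\<close> by simp
qed

end
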